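(* Let $\mathit{Vee}$ be the graph with vertices $u_1,u_2,u_3$ and edges $(u_1,u_2),(u_1,u_3)$, and let $\vec C_3$ be the directed 3-cycle with vertices $v_1,v_2,v_3$ and edges $(v_1,v_2),(v_2,v_3),(v_3,v_1)$. Then $\hom(\mathit{Vee},T)\ge\hom(\vec C_3,T)$ for every graph $T$, and $\mathsf{HDE}(\mathit{Vee},\vec C_3)=1$.
   Context: Graphs are finite directed graphs (loops allowed); a homomorphism $F\to T$ is a vertex map sending edges to edges, and $\hom(F,T)$ is their number. For $F\to G$, $\mathsf{HDE}(F,G)=\sup\{c\in\mathbb R:\hom(F,T)\ge\hom(G,T)^c\text{ for all graphs }T\}$. *)

theory Defs
  imports Complex_Main "HOL-Library.FuncSet"
begin

definition graph :: "'a set \<Rightarrow> ('a \<times> 'a) set \<Rightarrow> bool" where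
  "graph V E \<longleftrightarrow> finite V \<and> E \<subseteq> V \<times> V"

text \<open>Homomorphisms (F = (VF,EF)) \<rightarrow> (T = (VT,ET)): vertex maps VF \<rightarrow> VT (extensional,
  so that they are counted as maps on VF) sending edges to edges.\<close>
definition homs :: "'a set \<Rightarrow> ('a \<times> 'a) set \<Rightarrow> 'b set \<Rightarrow> ('b \<times> 'b) set \<Rightarrow> ('a \<Rightarrow> 'b) set" where
  "homs VF EF VT ET = {f \<in> VF \<rightarrow>\<^sub>E VT. \<forall>(x, y) \<in> EF. (f x, f y) \<in> ET}"

definition hom :: "'a set \<Rightarrow> ('a \<times> 'a) set \<Rightarrow> 'b set \<Rightarrow> ('b \<times> 'b) set \<Rightarrow> nat" where
  "hom VF EF VT ET = card (homs VF EF VT ET)"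

text \<open>Homomorphism domination exponent. The target graphs T range over all finite graphs;
  every finite graph is isomorphic to one with vertices in nat, so T is taken with
  vertex type nat.\<close>
definition HDE :: "'a set \<Rightarrow> ('a \<times> 'a) set \<Rightarrow> 'c set \<Rightarrow> ('c \<times> 'c) set \<Rightarrow> real" where
  "HDE VF EF VG EG = Sup {c :: real. \<forall>(VT :: nat set) ET. graph VT ET \<longrightarrow>
        real (hom VG EG VT ET) powr c \<le> real (hom VF EF VT ET)}"

definition Vee_V :: "nat set" where "Vee_V = {1, 2, 3}"
definition Vee_E :: "(nat \<times> nat) set" where "Vee_E = {(1, 2), (1, 3)}"
definition C3_V :: "nat set" where "C3_V = {1, 2, 3}"
definition C3_E :: "(nat \<times> nat) set" where "C3_E = {(1, 2), (2, 3), (3, 1)}"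

end

theory Submission
  imports Defs
begin

(*
  Both pattern graphs have vertex set {1,2,3}, so homomorphisms into a
  finite graph T = (V,E) are triples of vertices of T: hom(C3,T) is the number of
  closed directed triangles and hom(Vee,T) the number of triples (x,y,z) with
  x->y and x->z, i.e. the sum of the squared out-degrees d(x).
  For the inequality, weight each triangle x->y->z->x by d(x)/d(y): by AM-GM the three
  cyclic weights of a triangle sum to at least 3, and by cyclic symmetry each weight
  contributes the same total, so the triangle count is at most the d(x)/d(y)-weighted
  count.  Dropping the edge z->x bounds this by the sum over edges x->y of d(x), which is
  the sum of d(x)^2.
  For the exponent, a general criterion gives HDE = 1 whenever hom(G,T) <= hom(F,T) for
  all T and equality hom(F,T0) = hom(G,T0) > 1 holds for one T0; here T0 is the complete
  graph with loops on two vertices, into which any 3-vertex graph has 2^3 homomorphisms.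
*)

lemma hom_three_vertex_pattern:
  fixes EF :: "(nat \<times> nat) set" and P :: "'b \<Rightarrow> 'b \<Rightarrow> 'b \<Rightarrow> bool"
  assumes fin: "finite V"
    and pattern: "\<And>f. (\<forall>(i, j) \<in> EF. (f i, f j) \<in> E) \<longleftrightarrow> P (f 1) (f 2) (f 3)"
  shows "real (hom {1, 2, 3} EF V E) = (\<Sum>a\<in>V. \<Sum>b\<in>V. \<Sum>c\<in>V. of_bool (P a b c))"
proof -
  let ?Triples = "{t \<in> V \<times> V \<times> V. case t of (a, b, c) \<Rightarrow> P a b c}"
  define triple where "triple f = (f 1, f 2, f 3)" for f :: "nat \<Rightarrow> 'b"
  define assign :: "'b \<times> 'b \<times> 'b \<Rightarrow> nat \<Rightarrow> 'b" where "assign = (\<lambda>(a, b, c) n.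
    if n = 1 then a else if n = 2 then b else if n = 3 then c else undefined)"
  have "bij_betw triple (homs {1, 2, 3} EF V E) ?Triples"
  proof (rule bij_betw_byWitness[where f' = assign])
    show "\<forall>f\<in>homs {1, 2, 3} EF V E. assign (triple f) = f"
      by (auto simp: homs_def assign_def triple_def PiE_def extensional_def)
    show "\<forall>t\<in>?Triples. triple (assign t) = t"
      by (auto simp: assign_def triple_def)
    show "triple ` homs {1, 2, 3} EF V E \<subseteq> ?Triples"
      using pattern by (auto simp: homs_def triple_def)
    show "assign ` ?Triples \<subseteq> homs {1, 2, 3} EF V E"
      using pattern by (auto simp: homs_def assign_def split: if_splits)
  qed
  then have "hom {1, 2, 3} EF V E = card ?Triples"
    unfolding hom_def by (rule bij_betw_same_card)
  also have "real (card ?Triples) = (\<Sum>t\<in>?Triples. 1)"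
    by simp
  also have "\<dots> = (\<Sum>t\<in>V \<times> V \<times> V. of_bool (case t of (a, b, c) \<Rightarrow> P a b c))"
    unfolding of_bool_def using fin by (intro sum.inter_filter) simp
  also have "\<dots> = (\<Sum>a\<in>V. \<Sum>b\<in>V. \<Sum>c\<in>V. of_bool (P a b c))"
    by (simp add: sum.cartesian_product split_def)
  finally show ?thesis .
qed

definition adj :: "('a \<times> 'a) set \<Rightarrow> 'a \<Rightarrow> 'a \<Rightarrow> real" where
  "adj E x y = of_bool ((x, y) \<in> E)"

definition outdeg :: "'a set \<Rightarrow> ('a \<times> 'a) set \<Rightarrow> 'a \<Rightarrow> real" where
  "outdeg V E x = (\<Sum>y\<in>V. adj E x y)"

lemma outdeg_nonneg: "0 \<le> outdeg V E x"
  unfolding outdeg_def adj_def by (simp add: sum_nonneg)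

text \<open>A vertex with an out-neighbour in V has out-degree at least one; this keeps the
  degree ratios used below well defined.\<close>
lemma outdeg_ge_one:
  assumes "finite V" "y \<in> V" "(x, y) \<in> E"
  shows "1 \<le> outdeg V E x"
proof -
  have "adj E x y \<le> outdeg V E x"
    unfolding outdeg_def using assms by (intro member_le_sum) (auto simp: adj_def)
  with assms(3) show ?thesis by (simp add: adj_def)
qed

lemma cyclic_ratio_sum_ge_three:
  fixes a b c :: real
  assumes "a > 0" "b > 0" "c > 0"
  shows "3 \<le> a / b + b / c + c / a"
proof -
  have "ln (a / b) + ln (b / c) + ln (c / a) = 0"
    using assms by (simp add: ln_div)
  moreover have "ln (a / b) \<le> a / b - 1" "ln (b / c) \<le> b / c - 1" "ln (c / a) \<le> c / a - 1"
    using assms by (auto intro!: ln_le_minus_one)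
  ultimately show ?thesis by linarith
qed

lemma triple_sum_rotate:
  fixes f :: "'a \<Rightarrow> 'a \<Rightarrow> 'a \<Rightarrow> real"
  shows "(\<Sum>x\<in>V. \<Sum>y\<in>V. \<Sum>z\<in>V. f y z x) = (\<Sum>x\<in>V. \<Sum>y\<in>V. \<Sum>z\<in>V. f x y z)"
proof -
  have "(\<Sum>x\<in>V. \<Sum>y\<in>V. \<Sum>z\<in>V. f y z x) = (\<Sum>y\<in>V. \<Sum>x\<in>V. \<Sum>z\<in>V. f y z x)"
    by (rule sum.swap)
  also have "\<dots> = (\<Sum>y\<in>V. \<Sum>z\<in>V. \<Sum>x\<in>V. f y z x)"
    by (intro sum.cong refl sum.swap)
  finally show ?thesis .
qed

text \<open>Averaging step: weighting each directed triangle x->y->z->x by d(x)/d(y) does not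
  decrease the count, since the three cyclic weights of a triangle sum to at least 3 and
  each rotation contributes the same total.\<close>
lemma triangles_le_degree_weighted:
  fixes V :: "'a set" and E :: "('a \<times> 'a) set"
  assumes fin: "finite V"
  defines "W \<equiv> \<lambda>x y z. adj E x y * adj E y z * adj E z x"
    and "r \<equiv> \<lambda>x y. outdeg V E x / outdeg V E y"
  shows "(\<Sum>x\<in>V. \<Sum>y\<in>V. \<Sum>z\<in>V. W x y z) \<le> (\<Sum>x\<in>V. \<Sum>y\<in>V. \<Sum>z\<in>V. W x y z * r x y)"
    (is "?T \<le> ?S")
proof -
  have pointwise: "3 * W x y z \<le> W x y z * r x y + W x y z * r y z + W x y z * r z x"
    if "x \<in> V" "y \<in> V" "z \<in> V" for x y z
  proof (cases "(x, y) \<in> E \<and> (y, z) \<in> E \<and> (z, x) \<in> E")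
    case True
    then have "1 \<le> outdeg V E x" "1 \<le> outdeg V E y" "1 \<le> outdeg V E z"
      using that fin by (auto intro: outdeg_ge_one)
    then have "3 \<le> r x y + r y z + r z x"
      unfolding r_def by (intro cyclic_ratio_sum_ge_three) auto
    with True show ?thesis by (simp add: W_def adj_def)
  next
    case False
    then show ?thesis by (auto simp: W_def adj_def)
  qed
  have "3 * ?T \<le> (\<Sum>x\<in>V. \<Sum>y\<in>V. \<Sum>z\<in>V. W x y z * r x y)
      + (\<Sum>x\<in>V. \<Sum>y\<in>V. \<Sum>z\<in>V. W x y z * r y z) + (\<Sum>x\<in>V. \<Sum>y\<in>V. \<Sum>z\<in>V. W x y z * r z x)"
    unfolding sum_distrib_left sum.distrib[symmetric] by (intro sum_mono pointwise)
  also have "(\<Sum>x\<in>V. \<Sum>y\<in>V. \<Sum>z\<in>V. W x y z * r y z) = ?S"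
    by (subst triple_sum_rotate[symmetric]) (simp add: W_def mult_ac)
  also have "(\<Sum>x\<in>V. \<Sum>y\<in>V. \<Sum>z\<in>V. W x y z * r z x) = ?S"
    by (subst triple_sum_rotate) (simp add: W_def mult_ac)
  finally show ?thesis by linarith
qed

text \<open>Forgetting the closing edge z->x, the weighted count becomes a sum over edges
  x->y of d(x), that is the sum of the squared out-degrees.\<close>
lemma degree_weighted_le_squared_outdegrees:
  shows "(\<Sum>x\<in>V. \<Sum>y\<in>V. \<Sum>z\<in>V. adj E x y * adj E y z * adj E z x * (outdeg V E x / outdeg V E y))
      \<le> (\<Sum>x\<in>V. outdeg V E x ^ 2)"
proof -
  let ?d = "outdeg V E"
  have "(\<Sum>x\<in>V. \<Sum>y\<in>V. \<Sum>z\<in>V. adj E x y * adj E y z * adj E z x * (?d x / ?d y))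
      \<le> (\<Sum>x\<in>V. \<Sum>y\<in>V. \<Sum>z\<in>V. adj E x y * adj E y z * (?d x / ?d y))"
    by (intro sum_mono) (auto simp: adj_def outdeg_nonneg)
  also have "\<dots> = (\<Sum>x\<in>V. \<Sum>y\<in>V. adj E x y * (?d x / ?d y) * ?d y)"
  proof -
    have "(\<Sum>z\<in>V. adj E x y * adj E y z * q) = adj E x y * q * ?d y" for x y and q :: real
      by (simp add: outdeg_def sum_distrib_left mult_ac)
    then show ?thesis by (intro sum.cong refl) blast
  qed
  also have "\<dots> \<le> (\<Sum>x\<in>V. \<Sum>y\<in>V. adj E x y * ?d x)"
    by (intro sum_mono) (auto simp: adj_def outdeg_nonneg)
  also have "\<dots> = (\<Sum>x\<in>V. ?d x ^ 2)"
    by (simp add: outdeg_def power2_eq_square sum_distrib_right)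
  finally show ?thesis .
qed

lemma triangles_le_squared_outdegrees:
  assumes "finite V"
  shows "(\<Sum>x\<in>V. \<Sum>y\<in>V. \<Sum>z\<in>V. adj E x y * adj E y z * adj E z x) \<le> (\<Sum>x\<in>V. outdeg V E x ^ 2)"
  using triangles_le_degree_weighted[OF assms] degree_weighted_le_squared_outdegrees
  by (rule order_trans)

lemma hom_C3_eq_triangles:
  assumes "finite V"
  shows "real (hom C3_V C3_E V E) = (\<Sum>x\<in>V. \<Sum>y\<in>V. \<Sum>z\<in>V. adj E x y * adj E y z * adj E z x)"
proof -
  have "real (hom C3_V C3_E V E)
      = (\<Sum>x\<in>V. \<Sum>y\<in>V. \<Sum>z\<in>V. of_bool ((x, y) \<in> E \<and> (y, z) \<in> E \<and> (z, x) \<in> E))"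
    unfolding C3_V_def by (rule hom_three_vertex_pattern) (auto simp: assms C3_E_def)
  then show ?thesis by (simp only: adj_def of_bool_conj mult.assoc)
qed

lemma hom_Vee_eq_squared_outdegrees:
  assumes "finite V"
  shows "real (hom Vee_V Vee_E V E) = (\<Sum>x\<in>V. outdeg V E x ^ 2)"
proof -
  have "real (hom Vee_V Vee_E V E) = (\<Sum>x\<in>V. \<Sum>y\<in>V. \<Sum>z\<in>V. of_bool ((x, y) \<in> E \<and> (x, z) \<in> E))"
    unfolding Vee_V_def by (rule hom_three_vertex_pattern) (auto simp: assms Vee_E_def)
  also have "\<dots> = (\<Sum>x\<in>V. \<Sum>y\<in>V. \<Sum>z\<in>V. adj E x y * adj E x z)"
    by (simp only: adj_def of_bool_conj)
  also have "\<dots> = (\<Sum>x\<in>V. outdeg V E x ^ 2)"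
    by (simp add: outdeg_def power2_eq_square sum_product)
  finally show ?thesis .
qed

lemma hom_C3_le_hom_Vee:
  assumes "graph V E"
  shows "hom C3_V C3_E V E \<le> hom Vee_V Vee_E V E"
proof -
  have fin: "finite V" using assms by (simp add: graph_def)
  have "real (hom C3_V C3_E V E) \<le> real (hom Vee_V Vee_E V E)"
    unfolding hom_C3_eq_triangles[OF fin] hom_Vee_eq_squared_outdegrees[OF fin]
    using fin by (rule triangles_le_squared_outdegrees)
  then show ?thesis by simp
qed

text \<open>Every vertex map is a homomorphism into a complete graph with loops.\<close>
lemma hom_into_complete_looped:
  assumes "finite VF" "EF \<subseteq> VF \<times> VF"
  shows "hom VF EF VT (VT \<times> VT) = card VT ^ card VF"
proof -
  have "homs VF EF VT (VT \<times> VT) = VF \<rightarrow>\<^sub>E VT"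
    using assms(2) by (auto simp: homs_def PiE_def Pi_def)
  then show ?thesis
    unfolding hom_def using assms(1) by (simp add: card_PiE)
qed

lemma HDE_eq_one:
  fixes VT0 :: "nat set"
  assumes dom: "\<And>(VT :: nat set) ET. graph VT ET \<Longrightarrow> hom VG EG VT ET \<le> hom VF EF VT ET"
    and T0: "graph VT0 ET0" "hom VF EF VT0 ET0 = hom VG EG VT0 ET0" "hom VG EG VT0 ET0 > 1"
  shows "HDE VF EF VG EG = 1"
proof -
  let ?C = "{c :: real. \<forall>(VT :: nat set) ET. graph VT ET \<longrightarrow>
      real (hom VG EG VT ET) powr c \<le> real (hom VF EF VT ET)}"
  have "1 \<in> ?C"
    using dom by simp
  moreover have "c \<le> 1" if "c \<in> ?C" for c
  proof -
    let ?h = "real (hom VG EG VT0 ET0)"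
    have "?h powr c \<le> real (hom VF EF VT0 ET0)"
      using that T0(1) unfolding mem_Collect_eq by blast
    also have "\<dots> = ?h powr 1"
      using T0(2) by simp
    finally have "?h powr c \<le> ?h powr 1" .
    moreover have "1 < ?h" using T0(3) by simp
    ultimately show ?thesis by (simp only: powr_le_cancel_iff)
  qed
  ultimately show ?thesis
    unfolding HDE_def by (rule cSup_eq_maximum)
qed

lemma complete_looped_witness:
  defines "K \<equiv> {0, 1 :: nat}"
  shows "graph K (K \<times> K)" "hom Vee_V Vee_E K (K \<times> K) = 8" "hom C3_V C3_E K (K \<times> K) = 8"
proof -
  show "graph K (K \<times> K)"
    unfolding K_def graph_def by simp
  show "hom Vee_V Vee_E K (K \<times> K) = 8"
    unfolding K_def by (subst hom_into_complete_looped) (auto simp: Vee_V_def Vee_E_def)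
  show "hom C3_V C3_E K (K \<times> K) = 8"
    unfolding K_def by (subst hom_into_complete_looped) (auto simp: C3_V_def C3_E_def)
qed

theorem mainTheorem7:
  shows "(\<forall>(VT :: 'a set) ET. graph VT ET \<longrightarrow> hom C3_V C3_E VT ET \<le> hom Vee_V Vee_E VT ET)
         \<and> HDE Vee_V Vee_E C3_V C3_E = 1"
proof
  show "\<forall>(VT :: 'a set) ET. graph VT ET \<longrightarrow> hom C3_V C3_E VT ET \<le> hom Vee_V Vee_E VT ET"
    using hom_C3_le_hom_Vee by blast
  show "HDE Vee_V Vee_E C3_V C3_E = 1"
    using complete_looped_witness by (intro HDE_eq_one[OF hom_C3_le_hom_Vee]) auto
qed

end
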